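(* Let $A,B\in M_n(\mathbb{R}_+)$ be triangularizable projector matrices (i.e. $A^2=A$ and $B^2=B$). If the max commutator $C=[A,B]_\oplus = AB\oplus BA$ is nilpotent, then $A$ and $B$ are simultaneously triangularizable.
   Context: Max algebra: $\mathbb{R}_+$ the nonnegative reals with $a\oplus b=\max\{a,b\}$ and ordinary multiplication; for $A,B\in M_n(\mathbb{R}_+)$, $(AB)_{ij}=\max_k a_{ik}b_{kj}$ and $(A\oplus B)_{ij}=\max\{a_{ij},b_{ij}\}$; all powers and products are in this sense. A matrix is nilpotent if some power is $0$. $GL_n(\mathbb{R}_+)$ is the set of matrices invertible under this product (the generalized permutation matrices). $A$ is triangularizable if $P^{-1}AP$ is upper triangular for some $P\in GL_n(\mathbb{R}_+)$; $A,B$ are simultaneously triangularizable if one $P\in GL_n(\mathbb{R}_+)$ makes both $P^{-1}AP$ and $P^{-1}BP$ upper triangular. *)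

theory Defs
  imports Complex_Main
begin

text \<open>n x n matrices over the max algebra (nonnegative reals, max as addition,
ordinary multiplication), represented as functions nat => nat => real,
with indices 0..n-1; entries outside the range are 0.\<close>

definition is_mmat :: "nat \<Rightarrow> (nat \<Rightarrow> nat \<Rightarrow> real) \<Rightarrow> bool" where
  "is_mmat n A \<longleftrightarrow> (\<forall>i j. (i < n \<and> j < n \<longrightarrow> 0 \<le> A i j) \<and>
                          (\<not> (i < n \<and> j < n) \<longrightarrow> A i j = 0))"

definition mmult :: "nat \<Rightarrow> (nat \<Rightarrow> nat \<Rightarrow> real) \<Rightarrow> (nat \<Rightarrow> nat \<Rightarrow> real) \<Rightarrow> (nat \<Rightarrow> nat \<Rightarrow> real)" where
  "mmult n A B = (\<lambda>i j. if i < n \<and> j < n then Max ((\<lambda>k. A i k * B k j) ` {..<n}) else 0)"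

definition mplus :: "nat \<Rightarrow> (nat \<Rightarrow> nat \<Rightarrow> real) \<Rightarrow> (nat \<Rightarrow> nat \<Rightarrow> real) \<Rightarrow> (nat \<Rightarrow> nat \<Rightarrow> real)" where
  "mplus n A B = (\<lambda>i j. if i < n \<and> j < n then max (A i j) (B i j) else 0)"

definition mid :: "nat \<Rightarrow> (nat \<Rightarrow> nat \<Rightarrow> real)" where
  "mid n = (\<lambda>i j. if i < n \<and> j < n \<and> i = j then 1 else 0)"

fun mpow :: "nat \<Rightarrow> (nat \<Rightarrow> nat \<Rightarrow> real) \<Rightarrow> nat \<Rightarrow> (nat \<Rightarrow> nat \<Rightarrow> real)" where
  "mpow n A 0 = mid n"
| "mpow n A (Suc k) = mmult n A (mpow n A k)"

definition mnilpotent :: "nat \<Rightarrow> (nat \<Rightarrow> nat \<Rightarrow> real) \<Rightarrow> bool" where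
  "mnilpotent n A \<longleftrightarrow> (\<exists>k. mpow n A k = (\<lambda>i j. 0))"

definition minverse_pair :: "nat \<Rightarrow> (nat \<Rightarrow> nat \<Rightarrow> real) \<Rightarrow> (nat \<Rightarrow> nat \<Rightarrow> real) \<Rightarrow> bool" where
  "minverse_pair n P Q \<longleftrightarrow> is_mmat n P \<and> is_mmat n Q \<and>
      mmult n P Q = mid n \<and> mmult n Q P = mid n"

definition upper_triangular :: "(nat \<Rightarrow> nat \<Rightarrow> real) \<Rightarrow> bool" where
  "upper_triangular M \<longleftrightarrow> (\<forall>i j. j < i \<longrightarrow> M i j = 0)"

definition mtriangularizable :: "nat \<Rightarrow> (nat \<Rightarrow> nat \<Rightarrow> real) \<Rightarrow> bool" where
  "mtriangularizable n A \<longleftrightarrow> (\<exists>P Q. minverse_pair n P Q \<and>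
      upper_triangular (mmult n (mmult n Q A) P))"

definition msim_triangularizable :: "nat \<Rightarrow> (nat \<Rightarrow> nat \<Rightarrow> real) \<Rightarrow> (nat \<Rightarrow> nat \<Rightarrow> real) \<Rightarrow> bool" where
  "msim_triangularizable n A B \<longleftrightarrow> (\<exists>P Q. minverse_pair n P Q \<and>
      upper_triangular (mmult n (mmult n Q A) P) \<and>
      upper_triangular (mmult n (mmult n Q B) P))"

end

theory Submission
  imports Defs
begin

(* Write G(X) = mgraph n X - Id for the digraph of the off-diagonal positive entries of X.
   A generalized permutation triangularizing X numbers the indices monotonically along G(X), so
   G(X) is acyclic; conversely a topological numbering of an acyclic G(X) gives a permutation
   matrix triangularizing X. For idempotent A the inequality A i j * A j k <= A i k makes the
   positive pattern of A transitive, hence G(A) is transitive, and likewise G(B). A cycle of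
   G(A) O G(B) would give positive diagonal entries in every power of AB (+) BA, so nilpotency
   makes G(A) O G(B) acyclic. By transitivity a cycle of G(A) \<union> G(B) can be shortened to one
   alternating between G(A) and G(B), i.e. to a cycle of G(A) O G(B). Hence G(A) \<union> G(B) is
   acyclic, and one topological numbering of it triangularizes A and B simultaneously. *)

lemma mmult_entry_ge:
  assumes "i < n" "j < n" "k < n"
  shows "A i k * B k j \<le> mmult n A B i j"
  using assms unfolding mmult_def by (auto intro!: Max_ge)

lemma mmult_entry_attained:
  assumes "i < n" "j < n"
  obtains k where "k < n" "mmult n A B i j = A i k * B k j"
proof -
  have "Max ((\<lambda>k. A i k * B k j) ` {..<n}) \<in> (\<lambda>k. A i k * B k j) ` {..<n}"
    by (rule Max_in) (use assms in auto)
  then show ?thesis using assms that unfolding mmult_def by auto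
qed

lemma mmult_entry_eqI:
  assumes "i < n" "j < n" "m < n" "A i m * B m j = c" "\<And>k. k < n \<Longrightarrow> A i k * B k j \<le> c"
  shows "mmult n A B i j = c"
  using assms unfolding mmult_def by (auto intro!: Max_eqI)

lemma is_mmat_nonneg: "is_mmat n A \<Longrightarrow> 0 \<le> A i j"
  unfolding is_mmat_def by (metis order_refl)

lemma is_mmat_nonzero_in_range: "is_mmat n A \<Longrightarrow> A i j \<noteq> 0 \<Longrightarrow> i < n \<and> j < n"
  unfolding is_mmat_def by blast

definition mgraph :: "nat \<Rightarrow> (nat \<Rightarrow> nat \<Rightarrow> real) \<Rightarrow> (nat \<times> nat) set" where
  "mgraph n A = {(i, j). i < n \<and> j < n \<and> 0 < A i j}"

lemma mgraph_subset: "mgraph n A \<subseteq> {..<n} \<times> {..<n}"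
  unfolding mgraph_def by auto

lemma trans_mgraph_idempotent:
  assumes "mmult n A A = A"
  shows "trans (mgraph n A)"
proof (rule transI)
  fix i j k assume "(i, j) \<in> mgraph n A" "(j, k) \<in> mgraph n A"
  then have "i < n" "j < n" "k < n" "0 < A i j * A j k" by (auto simp: mgraph_def)
  moreover have "A i j * A j k \<le> A i k"
    using mmult_entry_ge[of i n k j A A] \<open>i < n\<close> \<open>j < n\<close> \<open>k < n\<close> assms by simp
  ultimately show "(i, k) \<in> mgraph n A" by (simp add: mgraph_def)
qed

lemma relcomp_mgraph_subset_mmult: "mgraph n A O mgraph n B \<subseteq> mgraph n (mmult n A B)"
proof (rule subrelI)
  fix x z assume "(x, z) \<in> mgraph n A O mgraph n B"
  then obtain y where "(x, y) \<in> mgraph n A" "(y, z) \<in> mgraph n B" by blast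
  then have "x < n" "y < n" "z < n" "0 < A x y * B y z" by (simp_all add: mgraph_def)
  moreover have "A x y * B y z \<le> mmult n A B x z"
    using mmult_entry_ge \<open>x < n\<close> \<open>y < n\<close> \<open>z < n\<close> by blast
  ultimately show "(x, z) \<in> mgraph n (mmult n A B)" by (simp add: mgraph_def)
qed

lemma mgraph_subset_mplus_left: "mgraph n A \<subseteq> mgraph n (mplus n A B)"
  unfolding mgraph_def mplus_def by auto

lemma mpow_pos_relpow:
  assumes "(x, y) \<in> mgraph n C ^^ k" "x < n" "y < n"
  shows "0 < mpow n C k x y"
  using assms(1,2)
proof (induction k arbitrary: x)
  case 0
  then show ?case using \<open>y < n\<close> by (simp add: mid_def)
next
  case (Suc k)
  then obtain z where xz: "(x, z) \<in> mgraph n C" and zy: "(z, y) \<in> mgraph n C ^^ k"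
    by (meson relpow_Suc_D2)
  then have "z < n" by (simp add: mgraph_def)
  have "0 < C x z * mpow n C k z y"
    using xz zy Suc.IH \<open>z < n\<close> by (simp add: mgraph_def)
  also have "C x z * mpow n C k z y \<le> mpow n C (Suc k) x y"
    using mmult_entry_ge \<open>x < n\<close> \<open>y < n\<close> \<open>z < n\<close> by simp
  finally show ?case .
qed

lemma mmult_zero_right: "mmult n A (\<lambda>i j. 0) = (\<lambda>i j. 0)"
  unfolding mmult_def by (auto intro!: Max_eqI ext)

lemma mpow_eq_zero_mono:
  assumes "mpow n C k = (\<lambda>i j. 0)" "k \<le> m"
  shows "mpow n C m = (\<lambda>i j. 0)"
  using assms(2) by (induction rule: dec_induct) (simp_all add: assms(1) mmult_zero_right)

lemma relpow_mult_refl: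
  assumes "(u, u) \<in> R ^^ m"
  shows "(u, u) \<in> R ^^ (m * j)"
proof (induction j)
  case (Suc j)
  then show ?case using assms by (auto simp: relpow_add)
qed simp

lemma acyclic_mgraph_mnilpotent:
  assumes "mnilpotent n C"
  shows "acyclic (mgraph n C)"
  unfolding acyclic_def
proof (intro allI notI)
  fix u assume "(u, u) \<in> (mgraph n C)\<^sup>+"
  then obtain m where "0 < m" "(u, u) \<in> mgraph n C ^^ m"
    using trancl_power by blast
  moreover obtain k where k: "mpow n C k = (\<lambda>i j. 0)"
    using assms unfolding mnilpotent_def by blast
  moreover have "u < n"
    using \<open>(u, u) \<in> (mgraph n C)\<^sup>+\<close> trancl_subset_Sigma[OF mgraph_subset] by blast
  ultimately have "0 < mpow n C (m * k) u u"
    using mpow_pos_relpow[OF relpow_mult_refl] by blast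
  moreover have "mpow n C (m * k) = (\<lambda>i j. 0)"
    using mpow_eq_zero_mono[OF k] \<open>0 < m\<close> by simp
  ultimately show False by simp
qed

lemma minverse_pair_diag_witness:
  assumes "minverse_pair n P Q" "x < n"
  obtains k where "k < n" "0 < P x k" "0 < Q k x"
proof -
  obtain k where k: "k < n" "mmult n P Q x x = P x k * Q k x"
    using mmult_entry_attained assms(2) by metis
  then have "P x k * Q k x = 1"
    using assms unfolding minverse_pair_def by (simp add: mid_def)
  moreover have "0 \<le> P x k" "0 \<le> Q k x"
    using assms(1) is_mmat_nonneg unfolding minverse_pair_def by blast+
  ultimately show ?thesis
    using that k(1) by (metis less_eq_real_def mult_zero_left mult_zero_right zero_neq_one)
qed

lemma minverse_pair_offdiag_zero:
  assumes "minverse_pair n P Q" "x \<noteq> y"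
  shows "P x k * Q k y = 0"
proof (cases "x < n \<and> y < n \<and> k < n")
  case True
  then have "P x k * Q k y \<le> mmult n P Q x y" by (simp add: mmult_entry_ge)
  also have "\<dots> = 0" using assms unfolding minverse_pair_def by (simp add: mid_def)
  finally show ?thesis
    using assms(1) is_mmat_nonneg unfolding minverse_pair_def
    by (metis antisym mult_nonneg_nonneg)
next
  case False
  then show ?thesis
    using assms(1) is_mmat_nonzero_in_range unfolding minverse_pair_def by fastforce
qed

lemma upper_triangular_conj_edge:
  assumes inv: "minverse_pair n P Q" and ut: "upper_triangular (mmult n (mmult n Q A) P)"
    and edge: "(x, y) \<in> mgraph n A" and "0 < Q s x" "0 < P y t"
  shows "s \<le> t"
proof (rule ccontr)
  assume "\<not> s \<le> t"
  have mP: "is_mmat n P" and mQ: "is_mmat n Q" using inv unfolding minverse_pair_def by auto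
  have "s < n" "t < n" "x < n" "y < n"
    using edge \<open>0 < Q s x\<close> \<open>0 < P y t\<close> is_mmat_nonzero_in_range[OF mQ, of s x]
      is_mmat_nonzero_in_range[OF mP, of y t] by (auto simp: mgraph_def)
  have "0 < Q s x * A x y * P y t"
    using edge \<open>0 < Q s x\<close> \<open>0 < P y t\<close> by (simp add: mgraph_def)
  also have "\<dots> \<le> mmult n Q A s y * P y t"
    using mmult_entry_ge \<open>s < n\<close> \<open>x < n\<close> \<open>y < n\<close> \<open>0 < P y t\<close> by (simp add: mult_right_mono)
  also have "\<dots> \<le> mmult n (mmult n Q A) P s t"
    using mmult_entry_ge \<open>s < n\<close> \<open>y < n\<close> \<open>t < n\<close> by blast
  also have "\<dots> = 0"
    using ut \<open>\<not> s \<le> t\<close> unfolding upper_triangular_def by simp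
  finally show False by simp
qed

lemma acyclic_mgraph_mtriangularizable:
  assumes "mtriangularizable n A"
  shows "acyclic (mgraph n A - Id)"
proof -
  obtain P Q where inv: "minverse_pair n P Q"
    and ut: "upper_triangular (mmult n (mmult n Q A) P)"
    using assms unfolding mtriangularizable_def by blast
  (* P Q = I gives every index x a position \<kappa> x with P x (\<kappa> x) > 0 and Q (\<kappa> x) x > 0.
     Upper triangularity makes \<kappa> weakly increasing along edges, and P Q = I forbids distinct
     indices on a common cycle from sharing their position. *)
  have "\<forall>x. \<exists>k. x < n \<longrightarrow> 0 < P x k \<and> 0 < Q k x"
    using minverse_pair_diag_witness[OF inv] by metis
  then obtain \<kappa> where \<kappa>: "\<And>x. x < n \<Longrightarrow> 0 < P x (\<kappa> x) \<and> 0 < Q (\<kappa> x) x"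
    by metis
  have edge: "\<kappa> x \<le> \<kappa> y" if "(x, y) \<in> mgraph n A" for x y
    using that \<kappa> upper_triangular_conj_edge[OF inv ut that] by (auto simp: mgraph_def)
  have path: "\<kappa> x \<le> \<kappa> y" if "(x, y) \<in> (mgraph n A)\<^sup>*" for x y
    using that by (induction rule: rtrancl_induct) (auto dest: edge)
  show ?thesis
    unfolding acyclic_def
  proof (intro allI notI)
    fix x assume "(x, x) \<in> (mgraph n A - Id)\<^sup>+"
    then obtain y where xy: "(x, y) \<in> mgraph n A - Id" and "(y, x) \<in> (mgraph n A - Id)\<^sup>*"
      by (meson tranclD)
    then have "(y, x) \<in> (mgraph n A)\<^sup>*" by (meson Diff_subset rtrancl_mono subsetD)
    then have "\<kappa> y = \<kappa> x" using path edge xy by (simp add: antisym)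
    moreover have "x < n" "y < n" "x \<noteq> y" using xy by (auto simp: mgraph_def)
    ultimately have "0 < P x (\<kappa> x) * Q (\<kappa> x) y" using \<kappa>[of x] \<kappa>[of y] by simp
    then show False using minverse_pair_offdiag_zero[OF inv \<open>x \<noteq> y\<close>] by simp
  qed
qed

lemma trans_diff_Id:
  assumes "trans R" "acyclic (R - Id)"
  shows "trans (R - Id)"
proof (rule transI)
  fix x y z assume xy: "(x, y) \<in> R - Id" and yz: "(y, z) \<in> R - Id"
  then have "(x, z) \<in> R" using assms(1) by (blast dest: transD)
  moreover have "x \<noteq> z"
    using xy yz assms(2) unfolding acyclic_def by (blast intro: trancl_into_trancl)
  ultimately show "(x, z) \<in> R - Id" by simp
qed

lemma relcomp_trancl_absorb_left:
  assumes "trans R"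
  shows "R O (R O S)\<^sup>+ \<subseteq> (R O S)\<^sup>+"
proof -
  have "R O (R O S)\<^sup>+ = ((R O R) O S) O (R O S)\<^sup>*"
    by (simp add: trancl_unfold_left O_assoc)
  also have "\<dots> \<subseteq> (R O S) O (R O S)\<^sup>*"
    using assms by (blast dest: transD)
  finally show ?thesis by (simp add: trancl_unfold_left)
qed

lemma relcomp_trancl_absorb_right:
  assumes "trans S"
  shows "(R O S)\<^sup>+ O R\<^sup>= O S \<subseteq> (R O S)\<^sup>+"
proof -
  have "(R O S)\<^sup>+ O S = (R O S)\<^sup>* O (R O (S O S))"
    by (simp add: trancl_unfold_right O_assoc)
  also have "\<dots> \<subseteq> (R O S)\<^sup>* O (R O S)"
    using assms by (blast dest: transD)
  finally have "(R O S)\<^sup>+ O S \<subseteq> (R O S)\<^sup>+" by (simp add: trancl_unfold_right)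
  moreover have "(R O S)\<^sup>+ O (R O S) \<subseteq> (R O S)\<^sup>+"
    by (blast intro: trancl_into_trancl)
  ultimately show ?thesis by blast
qed

(* Merging consecutive steps taken in the same relation, a path alternates between R and S. *)
lemma trancl_Un_trans_cases:
  assumes R: "trans R" and S: "trans S"
  shows "(R \<union> S)\<^sup>+ \<subseteq> R \<union> S \<union> S O R \<union> S\<^sup>= O (R O S)\<^sup>+ O R\<^sup>="
proof (rule subrelI)
  fix x z assume "(x, z) \<in> (R \<union> S)\<^sup>+"
  then show "(x, z) \<in> R \<union> S \<union> S O R \<union> S\<^sup>= O (R O S)\<^sup>+ O R\<^sup>="
  proof (induction rule: trancl_induct)
    case (step y z)
    from \<open>(y, z) \<in> R \<union> S\<close> show ?case
    proof
      assume "(y, z) \<in> R"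
      with step.IH R show ?case by (blast dest: transD)
    next
      assume yz: "(y, z) \<in> S"
      from step.IH consider "(x, y) \<in> R" | "(x, y) \<in> S" | "(x, y) \<in> S O R"
        | u w where "(x, u) \<in> S\<^sup>=" "(u, w) \<in> (R O S)\<^sup>+" "(w, y) \<in> R\<^sup>="
        by blast
      then show ?case
      proof cases
        case 3
        then obtain v where "(x, v) \<in> S" "(v, z) \<in> R O S" using yz by blast
        then show ?thesis by blast
      next
        case (4 u w)
        then have "(u, z) \<in> (R O S)\<^sup>+"
          using yz relcomp_trancl_absorb_right[OF S, of R] by blast
        then show ?thesis using \<open>(x, u) \<in> S\<^sup>=\<close> by blast
      qed (use yz S in \<open>blast dest: transD\<close>)+
    qed
  qed blast
qed

lemma acyclic_Un_trans:
  assumes R: "trans R" "acyclic R" and S: "trans S" "acyclic S" and RS: "acyclic (R O S)"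
  shows "acyclic (R \<union> S)"
  unfolding acyclic_def
proof (intro allI notI)
  fix x assume "(x, x) \<in> (R \<union> S)\<^sup>+"
  then consider "(x, x) \<in> R" | "(x, x) \<in> S" | "(x, x) \<in> S O R"
    | u w where "(x, u) \<in> S\<^sup>=" "(u, w) \<in> (R O S)\<^sup>+" "(w, x) \<in> R\<^sup>="
    using trancl_Un_trans_cases[OF R(1) S(1)] by blast
  then show False
  proof cases
    case 3
    then obtain y where "(y, y) \<in> R O S" by blast
    then show False using RS unfolding acyclic_def by blast
  next
    case (4 u w)
    have "(u, u) \<in> (R O S)\<^sup>+ \<or> (w, w) \<in> (R O S)\<^sup>+"
    proof (cases "x = u")
      case True
      then show ?thesis
        using 4 relcomp_trancl_absorb_left[OF R(1), of S] by blast
    next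
      case False
      then show ?thesis
        using 4 relcomp_trancl_absorb_right[OF S(1), of R] by blast
    qed
    then show False using RS unfolding acyclic_def by blast
  qed (use R(2) S(2) in \<open>auto simp: acyclic_def\<close>)
qed

lemma rank_less:
  fixes f :: "nat \<Rightarrow> 'a::linorder"
  assumes "u < n" "f u < f v"
  shows "card {w \<in> {..<n}. f w < f u} < card {w \<in> {..<n}. f w < f v}"
  by (rule psubset_card_mono) (use assms in auto)

lemma bij_betw_rank:
  fixes f :: "nat \<Rightarrow> 'a::linorder"
  assumes "inj_on f {..<n}"
  shows "bij_betw (\<lambda>v. card {w \<in> {..<n}. f w < f v}) {..<n} {..<n}"
    (is "bij_betw ?rank _ _")
proof -
  have inj: "inj_on ?rank {..<n}"
  proof (rule inj_onI)
    fix u v assume uv: "u \<in> {..<n}" "v \<in> {..<n}" "?rank u = ?rank v"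
    show "u = v"
    proof (rule ccontr)
      assume "u \<noteq> v"
      then have "f u \<noteq> f v" using assms uv(1,2) by (meson inj_onD)
      then have "f u < f v \<or> f v < f u" by (simp add: neq_iff)
      then show False
        using rank_less[of u n f v] rank_less[of v n f u] uv by auto
    qed
  qed
  have "?rank v < n" if "v < n" for v
  proof -
    have "?rank v \<le> card ({..<n} - {v})" by (rule card_mono) auto
    then show ?thesis using that by simp
  qed
  then have "?rank ` {..<n} = {..<n}"
    using endo_inj_surj[OF _ _ inj] by auto
  with inj show ?thesis by (simp add: bij_betw_def)
qed

lemma acyclic_topological_numbering:
  fixes R :: "(nat \<times> nat) set"
  assumes sub: "R \<subseteq> {..<n} \<times> {..<n}" and acyc: "acyclic R"
  obtains \<rho> where "bij_betw \<rho> {..<n} {..<n}" "\<And>u v. (u, v) \<in> R \<Longrightarrow> \<rho> u < \<rho> v"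
proof -
  define height where "height v = card {u. (u, v) \<in> R\<^sup>+}" for v
  define key where "key v = height v * n + v" for v
    \<comment> \<open>the lexicographic order on (height v, v), encoded in nat using v < n\<close>
  have height_less: "height u < height v" if "(u, v) \<in> R" for u v
    unfolding height_def
  proof (rule psubset_card_mono)
    show "finite {w. (w, v) \<in> R\<^sup>+}"
      by (rule finite_subset[of _ "{..<n}"]) (use trancl_subset_Sigma[OF sub] in auto)
    have "{w. (w, u) \<in> R\<^sup>+} \<subseteq> {w. (w, v) \<in> R\<^sup>+}"
      using that by (auto intro: trancl_into_trancl)
    moreover have "u \<in> {w. (w, v) \<in> R\<^sup>+}" "u \<notin> {w. (w, u) \<in> R\<^sup>+}"
      using that acyc by (auto simp: acyclic_def)
    ultimately show "{w. (w, u) \<in> R\<^sup>+} \<subset> {w. (w, v) \<in> R\<^sup>+}" by blast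
  qed
  have "inj_on key {..<n}"
  proof (rule inj_onI)
    fix u v assume "u \<in> {..<n}" "v \<in> {..<n}" "key u = key v"
    then have "key u mod n = key v mod n" by simp
    with \<open>u \<in> {..<n}\<close> \<open>v \<in> {..<n}\<close> show "u = v" by (simp add: key_def)
  qed
  then have "bij_betw (\<lambda>v. card {w \<in> {..<n}. key w < key v}) {..<n} {..<n}"
    by (rule bij_betw_rank)
  moreover have "card {w \<in> {..<n}. key w < key u} < card {w \<in> {..<n}. key w < key v}"
    if "(u, v) \<in> R" for u v
  proof (rule rank_less)
    have "u < n" using that sub by blast
    then have "key u < (height u + 1) * n" by (simp add: key_def)
    also have "\<dots> \<le> height v * n" using height_less[OF that] by (intro mult_le_mono1) simp
    finally show "key u < key v" by (simp add: key_def)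
  qed (use that sub in blast)
  ultimately show ?thesis by (rule that)
qed

definition perm_mat :: "nat \<Rightarrow> (nat \<Rightarrow> nat) \<Rightarrow> nat \<Rightarrow> nat \<Rightarrow> real" where
  "perm_mat n \<rho> = (\<lambda>i j. if i < n \<and> j < n \<and> \<rho> i = j then 1 else 0)"

lemma minverse_pair_perm_mat:
  assumes bij: "bij_betw \<rho> {..<n} {..<n}"
  shows "minverse_pair n (perm_mat n \<rho>) (\<lambda>i j. perm_mat n \<rho> j i)"
    (is "minverse_pair n ?P ?Q")
proof -
  have "mmult n ?P ?Q i j = mid n i j" for i j
  proof (cases "i < n \<and> j < n")
    case True
    then have "\<rho> i < n" using bij bij_betwE by blast
    with True show ?thesis
      using bij_betw_imp_inj_on[OF bij]
      by (intro mmult_entry_eqI[where m = "\<rho> i"]) (auto simp: perm_mat_def mid_def dest: inj_onD)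
  qed (auto simp: mmult_def mid_def)
  moreover have "mmult n ?Q ?P i j = mid n i j" for i j
  proof (cases "i < n \<and> j < n")
    case True
    then obtain k where "k < n" "\<rho> k = i" using bij by (metis bij_betw_iff_bijections lessThan_iff)
    with True show ?thesis
      by (intro mmult_entry_eqI[where m = k]) (auto simp: perm_mat_def mid_def)
  qed (auto simp: mmult_def mid_def)
  moreover have "is_mmat n ?P" "is_mmat n ?Q" by (auto simp: is_mmat_def perm_mat_def)
  ultimately show ?thesis unfolding minverse_pair_def by blast
qed

lemma upper_triangular_perm_conj:
  assumes X: "is_mmat n X" and mono: "\<And>k l. (k, l) \<in> mgraph n X - Id \<Longrightarrow> \<rho> k < \<rho> l"
  shows "upper_triangular (mmult n (mmult n (\<lambda>i j. perm_mat n \<rho> j i) X) (perm_mat n \<rho>))"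
  unfolding upper_triangular_def
proof (intro allI impI)
  fix i j :: nat assume "j < i"
  show "mmult n (mmult n (\<lambda>i j. perm_mat n \<rho> j i) X) (perm_mat n \<rho>) i j = 0"
  proof (cases "i < n \<and> j < n")
    case True
    then obtain l where l: "l < n"
      "mmult n (mmult n (\<lambda>i j. perm_mat n \<rho> j i) X) (perm_mat n \<rho>) i j
        = mmult n (\<lambda>i j. perm_mat n \<rho> j i) X i l * perm_mat n \<rho> l j"
      using mmult_entry_attained by metis
    obtain k where k: "k < n"
      "mmult n (\<lambda>i j. perm_mat n \<rho> j i) X i l = perm_mat n \<rho> k i * X k l"
      using mmult_entry_attained True l(1) by metis
    have "perm_mat n \<rho> k i * X k l * perm_mat n \<rho> l j = 0"
    proof (rule ccontr)
      assume "perm_mat n \<rho> k i * X k l * perm_mat n \<rho> l j \<noteq> 0"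
      then have "\<rho> k = i" "\<rho> l = j" "0 < X k l"
        using is_mmat_nonneg[OF X, of k l] by (auto simp: perm_mat_def split: if_splits)
      then show False
        using mono[of k l] k(1) l(1) \<open>j < i\<close> by (cases "k = l") (auto simp: mgraph_def)
    qed
    then show ?thesis using l k by simp
  qed (auto simp: mmult_def)
qed

lemma msim_triangularizable_acyclic:
  assumes A: "is_mmat n A" and B: "is_mmat n B"
    and acyc: "acyclic ((mgraph n A - Id) \<union> (mgraph n B - Id))"
  shows "msim_triangularizable n A B"
proof -
  have sub: "(mgraph n A - Id) \<union> (mgraph n B - Id) \<subseteq> {..<n} \<times> {..<n}"
    using mgraph_subset by blast
  obtain \<rho> where bij: "bij_betw \<rho> {..<n} {..<n}"
    and mono: "\<And>u v. (u, v) \<in> (mgraph n A - Id) \<union> (mgraph n B - Id) \<Longrightarrow> \<rho> u < \<rho> v"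
    using acyclic_topological_numbering[OF sub acyc] by blast
  have "upper_triangular (mmult n (mmult n (\<lambda>i j. perm_mat n \<rho> j i) A) (perm_mat n \<rho>))"
    by (rule upper_triangular_perm_conj[OF A]) (simp add: mono)
  moreover have "upper_triangular (mmult n (mmult n (\<lambda>i j. perm_mat n \<rho> j i) B) (perm_mat n \<rho>))"
    by (rule upper_triangular_perm_conj[OF B]) (simp add: mono)
  ultimately show ?thesis
    unfolding msim_triangularizable_def using minverse_pair_perm_mat[OF bij] by blast
qed

theorem theorem3p12:
  fixes n :: nat and A B :: "nat \<Rightarrow> nat \<Rightarrow> real"
  assumes "is_mmat n A" and "is_mmat n B"
    and "mtriangularizable n A" and "mtriangularizable n B"
    and "mmult n A A = A" and "mmult n B B = B"
    and "mnilpotent n (mplus n (mmult n A B) (mmult n B A))"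
  shows "msim_triangularizable n A B"
proof -
  have acyc_A: "acyclic (mgraph n A - Id)" and acyc_B: "acyclic (mgraph n B - Id)"
    using assms(3,4) by (simp_all add: acyclic_mgraph_mtriangularizable)
  have trans_A: "trans (mgraph n A - Id)" and trans_B: "trans (mgraph n B - Id)"
    using trans_diff_Id[OF trans_mgraph_idempotent[OF assms(5)] acyc_A]
      trans_diff_Id[OF trans_mgraph_idempotent[OF assms(6)] acyc_B] .
  have "(mgraph n A - Id) O (mgraph n B - Id) \<subseteq> mgraph n A O mgraph n B" by blast
  also have "\<dots> \<subseteq> mgraph n (mplus n (mmult n A B) (mmult n B A))"
    using relcomp_mgraph_subset_mmult mgraph_subset_mplus_left by (rule subset_trans)
  finally have "(mgraph n A - Id) O (mgraph n B - Id)
      \<subseteq> mgraph n (mplus n (mmult n A B) (mmult n B A))" .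
  then have "acyclic ((mgraph n A - Id) O (mgraph n B - Id))"
    by (rule acyclic_subset[OF acyclic_mgraph_mnilpotent[OF assms(7)]])
  then have "acyclic ((mgraph n A - Id) \<union> (mgraph n B - Id))"
    by (rule acyclic_Un_trans[OF trans_A acyc_A trans_B acyc_B])
  then show ?thesis by (rule msim_triangularizable_acyclic[OF assms(1,2)])
qed

end
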